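(* Let $F$ be a nonempty face of $V_O$, let $\mathcal U_F=\{\lambda\in\Xi_1: F\subseteq H_\lambda\}$ and $\phi(F)=\bigcup_{\lambda\in\mathcal U_F}\mathrm{supp}(\lambda)$. Then $\phi(F)$ is a strongly connected orientation of a subgraph of $G$, and for every $\lambda\in\Xi_1$ we have $\lambda\in\mathcal U_F$ if and only if $\mathrm{supp}(\lambda)\subseteq\phi(F)$.
   Context: $G=(V,E)$ is a finite connected graph, possibly with parallel edges and loops; $\mathbb E$ is the set of oriented edges ($e$ and its reverse $\bar e$). Real $1$-chains $x:\mathbb E\to\mathbb R$ satisfy $x_{\bar e}=-x_e$; $\langle x,y\rangle=\sum_{e\in E}x_ey_e$, $q(x)=\langle x,x\rangle$. A flow satisfies $\sum_{e\text{ with tail }v}x_e=0$ at every vertex $v$; $H$ is the space of real flows and $\Lambda$ the lattice of integer flows. $V_O=\{x\in H: q(x)\le q(x-\mu)\ \forall\mu\in\Lambda\}$. For a flow $x$, $\mathrm{supp}(x)=\{e\in\mathbb E: x_e>0\}$. A circuit is an orientation of a cycle as a directed cycle; $x^C_e=1$ if $e\in C$, $-1$ if $\bar e\in C$, $0$ otherwise. $\Xi_1=\{x^C: C\text{ a circuit}\}$. For $\lambda\in\Xi_1$, $H_\lambda=\{x\in H: 2\langle x,\lambda\rangle=q(\lambda)\}$. An orientation of a subgraph is strongly connected if on each connected component any two vertices are joined by directed paths in both directions. *)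

theory Defs
  imports "HOL-Analysis.Analysis"
begin

text \<open>A finite connected multigraph (loops and parallel edges allowed): vertices are the
 finite type 'v, edges the finite type 'e, each edge e carries a reference orientation from
 vertex src e to vertex tgt e.  Oriented edges are pairs (e, b): (e, True) is e with its
 reference orientation, (e, False) is its reverse.  A real 1-chain x is determined by its
 values on the reference orientations, so chains are vectors in real ^ 'e.\<close>

definition otail :: "('e \<Rightarrow> 'v) \<Rightarrow> ('e \<Rightarrow> 'v) \<Rightarrow> 'e \<times> bool \<Rightarrow> 'v" where
  "otail src tgt a = (if snd a then src (fst a) else tgt (fst a))"

definition ohead :: "('e \<Rightarrow> 'v) \<Rightarrow> ('e \<Rightarrow> 'v) \<Rightarrow> 'e \<times> bool \<Rightarrow> 'v" where
  "ohead src tgt a = (if snd a then tgt (fst a) else src (fst a))"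

definition oval :: "real ^ 'e \<Rightarrow> 'e \<times> bool \<Rightarrow> real" where
  "oval x a = (if snd a then x $ fst a else - (x $ fst a))"

definition connected_graph :: "('e \<Rightarrow> 'v) \<Rightarrow> ('e \<Rightarrow> 'v) \<Rightarrow> bool" where
  "connected_graph src tgt \<longleftrightarrow>
     (\<forall>u v. (u, v) \<in> ({(src e, tgt e) | e. True} \<union> {(tgt e, src e) | e. True})\<^sup>*)"

definition qf :: "real ^ 'e \<Rightarrow> real" where
  "qf x = x \<bullet> x"

definition flows :: "('e::finite \<Rightarrow> 'v) \<Rightarrow> ('e \<Rightarrow> 'v) \<Rightarrow> (real ^ 'e) set" where
  "flows src tgt = {x. \<forall>v. (\<Sum>a\<in>{a. otail src tgt a = v}. oval x a) = 0}"

definition int_flows :: "('e::finite \<Rightarrow> 'v) \<Rightarrow> ('e \<Rightarrow> 'v) \<Rightarrow> (real ^ 'e) set" where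
  "int_flows src tgt = {x \<in> flows src tgt. \<forall>e. x $ e \<in> \<int>}"

definition VO :: "('e::finite \<Rightarrow> 'v) \<Rightarrow> ('e \<Rightarrow> 'v) \<Rightarrow> (real ^ 'e) set" where
  "VO src tgt = {x \<in> flows src tgt. \<forall>\<mu> \<in> int_flows src tgt. qf x \<le> qf (x - \<mu>)}"

definition supp :: "real ^ 'e \<Rightarrow> ('e \<times> bool) set" where
  "supp x = {a. oval x a > 0}"

text \<open>A circuit: orientation of a cycle as a directed cycle, given by a closed directed
 walk a_0, ..., a_{k-1} (k >= 1) with pairwise distinct underlying edges and pairwise
 distinct tail vertices (loops are cycles of length 1, two parallel edges a cycle of length 2).\<close>
definition circuit :: "('e \<Rightarrow> 'v) \<Rightarrow> ('e \<Rightarrow> 'v) \<Rightarrow> ('e \<times> bool) set \<Rightarrow> bool" where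
  "circuit src tgt C \<longleftrightarrow> (\<exists>cs. cs \<noteq> [] \<and> C = set cs \<and> distinct (map fst cs) \<and>
      distinct (map (otail src tgt) cs) \<and>
      (\<forall>i < length cs. ohead src tgt (cs ! i) = otail src tgt (cs ! ((i + 1) mod length cs))))"

definition circ_vec :: "('e \<times> bool) set \<Rightarrow> real ^ 'e" where
  "circ_vec C = (\<chi> e. if (e, True) \<in> C then 1 else if (e, False) \<in> C then -1 else 0)"

definition Xi1 :: "('e \<Rightarrow> 'v) \<Rightarrow> ('e \<Rightarrow> 'v) \<Rightarrow> (real ^ 'e) set" where
  "Xi1 src tgt = {circ_vec C | C. circuit src tgt C}"

definition Hyp :: "('e::finite \<Rightarrow> 'v) \<Rightarrow> ('e \<Rightarrow> 'v) \<Rightarrow> real ^ 'e \<Rightarrow> (real ^ 'e) set" where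
  "Hyp src tgt lam = {x \<in> flows src tgt. 2 * (x \<bullet> lam) = qf lam}"

text \<open>D is an orientation of a subgraph (each edge used in at most one direction), and it is
 strongly connected: vertices in the same connected component of the underlying subgraph are
 joined by directed paths in both directions.\<close>
definition strongly_connected_orientation ::
    "('e \<Rightarrow> 'v) \<Rightarrow> ('e \<Rightarrow> 'v) \<Rightarrow> ('e \<times> bool) set \<Rightarrow> bool" where
  "strongly_connected_orientation src tgt D \<longleftrightarrow>
     (\<forall>e. \<not> ((e, True) \<in> D \<and> (e, False) \<in> D)) \<and>
     (let R = {(otail src tgt a, ohead src tgt a) | a. a \<in> D} in
        \<forall>u v. (u, v) \<in> (R \<union> R\<inverse>)\<^sup>* \<longrightarrow> (u, v) \<in> R\<^sup>*)"

end

theory Submission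
  imports Defs
begin

text \<open>
  For a flow x call the slack of a directed walk W the number
  sum over a in W of (1 - 2 x_a).  For a circuit C with vector lambda_C the slack of C is
  q(lambda_C) - 2<x, lambda_C>, so x lies on H_lambda_C exactly when C has slack 0 ("C is tight
  at x"), and the Voronoi inequality q(x) <= q(x - lambda_C) says that the slack of every circuit
  is nonnegative on V_O.  Splitting a closed walk at a repeated vertex or cancelling a pair of
  opposite arcs extends this to: every closed walk has nonnegative slack at a point of V_O.

  Let D(x) be the union of the circuits tight at x.  Every arc a of D(x) has a return walk inside
  D(x) whose slack is minus that of a (the rest of a tight circuit through a); concatenating these,
  every walk in D(x) can be reversed inside D(x) with opposite slack.  Since closed walks have
  nonnegative slack this gives: D(x) contains no pair of opposite arcs, D(x) is strongly
  connected, and every circuit contained in D(x) is tight at x.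

  Finally, for a nonempty convex F in V_O (e.g. a face) a point x0 of F with the fewest tight
  circuits is tight exactly on the circuits tight on all of F: otherwise the midpoint of x0 and a
  point y of F would have strictly fewer.  The theorem is the statement above for D(x0).
\<close>

subsection \<open>Oriented edges and directed walks\<close>

definition rev_arc :: "'e \<times> bool \<Rightarrow> 'e \<times> bool" where
  "rev_arc a = (fst a, \<not> snd a)"

lemma oval_rev_arc [simp]: "oval x (rev_arc a) = - oval x a"
  by (simp add: oval_def rev_arc_def)

lemma otail_rev_arc [simp]: "otail s t (rev_arc a) = ohead s t a"
  and ohead_rev_arc [simp]: "ohead s t (rev_arc a) = otail s t a"
  by (simp_all add: rev_arc_def otail_def ohead_def)

lemma rev_arc_rev_arc [simp]: "rev_arc (rev_arc a) = a"
  by (simp add: rev_arc_def)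

lemma same_edge_rev_arc: "fst a = fst b \<Longrightarrow> a \<noteq> b \<Longrightarrow> b = rev_arc a"
  by (cases a; cases b) (auto simp: rev_arc_def)

fun dwalk :: "('e \<Rightarrow> 'v) \<Rightarrow> ('e \<Rightarrow> 'v) \<Rightarrow> 'v \<Rightarrow> ('e \<times> bool) list \<Rightarrow> 'v \<Rightarrow> bool" where
  "dwalk s t u [] v \<longleftrightarrow> u = v"
| "dwalk s t u (a # ws) v \<longleftrightarrow> otail s t a = u \<and> dwalk s t (ohead s t a) ws v"

lemma dwalk_append:
  "dwalk s t u (xs @ ys) v \<longleftrightarrow> (\<exists>w. dwalk s t u xs w \<and> dwalk s t w ys v)"
  by (induction xs arbitrary: u) auto

lemma dwalk_iff_shift:
  "dwalk s t u ws v \<longleftrightarrow> map (otail s t) ws @ [v] = u # map (ohead s t) ws"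
  by (induction ws arbitrary: u) auto

lemma closed_dwalk_heads:
  assumes "dwalk s t u ws u"
  shows "map (ohead s t) ws = rotate1 (map (otail s t) ws)"
  using assms unfolding dwalk_iff_shift by (cases "map (otail s t) ws") auto

lemma cyclic_iff_closed_dwalk:
  assumes "cs \<noteq> []"
  shows "(\<forall>i < length cs. ohead s t (cs ! i) = otail s t (cs ! ((i + 1) mod length cs)))
     \<longleftrightarrow> (\<exists>u. dwalk s t u cs u)" (is "?cyclic \<longleftrightarrow> _")
proof -
  have "?cyclic \<longleftrightarrow> (\<forall>i < length cs.
          map (ohead s t) cs ! i = rotate1 (map (otail s t) cs) ! i)"
    using assms by (simp add: nth_rotate1)
  also have "\<dots> \<longleftrightarrow> map (ohead s t) cs = rotate1 (map (otail s t) cs)"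
    by (simp add: list_eq_iff_nth_eq)
  also have "\<dots> \<longleftrightarrow> (\<exists>u. dwalk s t u cs u)"
  proof
    assume heads: "map (ohead s t) cs = rotate1 (map (otail s t) cs)"
    obtain c cs' where "cs = c # cs'" using assms by (cases cs) auto
    then have "dwalk s t (otail s t c) cs (otail s t c)"
      using heads unfolding dwalk_iff_shift by simp
    then show "\<exists>u. dwalk s t u cs u" ..
  qed (auto dest: closed_dwalk_heads)
  finally show ?thesis .
qed

lemma circuit_iff_closed_dwalk:
  "circuit s t C \<longleftrightarrow> (\<exists>cs u. cs \<noteq> [] \<and> C = set cs \<and> distinct (map fst cs) \<and>
      distinct (map (otail s t) cs) \<and> dwalk s t u cs u)"
proof -
  have "circuit s t C \<longleftrightarrow> (\<exists>cs. cs \<noteq> [] \<and> C = set cs \<and> distinct (map fst cs) \<and>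
      distinct (map (otail s t) cs) \<and> (\<exists>u. dwalk s t u cs u))"
    unfolding circuit_def by (intro ex_cong conj_cong refl cyclic_iff_closed_dwalk) simp
  then show ?thesis by blast
qed

definition walk_slack :: "real ^ 'e \<Rightarrow> ('e \<times> bool) list \<Rightarrow> real" where
  "walk_slack x ws = (\<Sum>a\<leftarrow>ws. 1 - 2 * oval x a)"

lemma walk_slack_simps [simp]:
  "walk_slack x [] = 0"
  "walk_slack x (a # ws) = 1 - 2 * oval x a + walk_slack x ws"
  "walk_slack x (xs @ ys) = walk_slack x xs + walk_slack x ys"
  by (simp_all add: walk_slack_def)

subsection \<open>Circuit vectors\<close>

definition one_way :: "('e \<times> bool) set \<Rightarrow> bool" where
  "one_way D \<longleftrightarrow> (\<forall>e. \<not> ((e, True) \<in> D \<and> (e, False) \<in> D))"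

lemma one_way_rev_arc: "one_way D \<Longrightarrow> a \<in> D \<Longrightarrow> rev_arc a \<notin> D"
  unfolding one_way_def rev_arc_def by (cases a; cases "snd a") auto

lemma distinct_edges_one_way:
  assumes "distinct (map fst cs)"
  shows "one_way (set cs)"
  unfolding one_way_def
proof (intro allI notI)
  fix e assume "(e, True) \<in> set cs \<and> (e, False) \<in> set cs"
  moreover have "inj_on fst (set cs)" using assms by (simp add: distinct_map)
  ultimately have "(e, True) = (e, False)"
    using inj_onD[of fst "set cs" "(e, True)" "(e, False)"] by simp
  then show False by simp
qed

lemma oval_circ_vec:
  "one_way C \<Longrightarrow> oval (circ_vec C) a = (if a \<in> C then 1 else if rev_arc a \<in> C then -1 else 0)"
  unfolding one_way_def by (cases a) (auto simp: oval_def circ_vec_def rev_arc_def)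

lemma supp_circ_vec: "one_way C \<Longrightarrow> supp (circ_vec C) = C"
  unfolding supp_def by (auto simp: oval_circ_vec)

lemma inner_circ_vec:
  fixes x :: "real ^ 'e::finite"
  assumes "one_way C"
  shows "x \<bullet> circ_vec C = (\<Sum>a\<in>C. oval x a)"
proof -
  have "(\<Sum>a\<in>C. oval x a) = (\<Sum>(e, b)\<in>UNIV. if (e, b) \<in> C then oval x (e, b) else 0)"
    by (simp add: sum.If_cases)
  also have "\<dots> = (\<Sum>e\<in>UNIV. x $ e * circ_vec C $ e)"
    unfolding UNIV_Times_UNIV[symmetric] sum.cartesian_product[symmetric]
    using assms unfolding one_way_def by (auto simp: UNIV_bool oval_def circ_vec_def intro!: sum.cong)
  finally show ?thesis by (simp add: inner_vec_def)
qed

lemma qf_circ_vec: "one_way (C :: ('e::finite \<times> bool) set) \<Longrightarrow> qf (circ_vec C) = real (card C)"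
  unfolding qf_def by (simp add: inner_circ_vec oval_circ_vec)

lemma circ_vec_walk_slack:
  fixes x :: "real ^ 'e::finite"
  assumes "distinct (map fst cs)"
  shows "qf (circ_vec (set cs)) - 2 * (x \<bullet> circ_vec (set cs)) = walk_slack x cs"
proof -
  have "distinct cs" using assms by (simp add: distinct_map)
  then show ?thesis
    using distinct_edges_one_way[OF assms]
    by (simp add: qf_circ_vec inner_circ_vec walk_slack_def sum_list_distinct_conv_sum_set
        distinct_card sum_subtractf sum_distrib_left)
qed

lemma card_arcs_at:
  assumes "distinct cs"
  shows "card {a \<in> set cs. f a = v} = length (filter ((=) v) (map f cs))"
  using distinct_length_filter[OF assms, of "\<lambda>a. f a = v"]
  by (simp add: filter_map o_def Int_commute Collect_conj_eq eq_commute[of v])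

lemma length_filter_rotate1: "length (filter P (rotate1 xs)) = length (filter P xs)"
  by (cases xs) auto

lemma sum_indicator_fiber:
  fixes f :: "'a::finite \<Rightarrow> 'b"
  shows "(\<Sum>a | f a = v. of_bool (a \<in> C) :: real) = real (card {a \<in> C. f a = v})"
proof -
  have "{a. f a = v} \<inter> {a. a \<in> C} = {a \<in> C. f a = v}" by auto
  then show ?thesis by simp
qed

text \<open>Circuit vectors are integer flows: in a closed walk without repeated vertices each
  vertex is entered as often as it is left.\<close>
lemma circuit_int_flow:
  fixes s t :: "'e::finite \<Rightarrow> 'v"
  assumes "circuit s t C"
  shows "circ_vec C \<in> int_flows s t"
proof -
  obtain cs u where cs: "C = set cs" "distinct (map fst cs)" "dwalk s t u cs u"
    using assms by (auto simp: circuit_iff_closed_dwalk)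
  have ow: "one_way C" and dist: "distinct cs"
    using cs distinct_edges_one_way by (auto simp: distinct_map)
  have in_out: "card {a \<in> C. otail s t a = v} = card {a \<in> C. ohead s t a = v}" for v
  proof -
    have "card {a \<in> C. ohead s t a = v} = length (filter ((=) v) (map (ohead s t) cs))"
      unfolding cs(1) by (rule card_arcs_at[OF dist])
    also have "\<dots> = length (filter ((=) v) (map (otail s t) cs))"
      by (simp only: closed_dwalk_heads[OF cs(3)] length_filter_rotate1)
    also have "\<dots> = card {a \<in> C. otail s t a = v}"
      unfolding cs(1) by (rule card_arcs_at[OF dist, symmetric])
    finally show ?thesis ..
  qed
  have "(\<Sum>a | otail s t a = v. oval (circ_vec C) a) = 0" for v
  proof -
    have "(\<Sum>a | otail s t a = v. oval (circ_vec C) a)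
        = (\<Sum>a | otail s t a = v. of_bool (a \<in> C)) - (\<Sum>a | otail s t a = v. of_bool (rev_arc a \<in> C))"
      unfolding sum_subtractf[symmetric]
      by (rule sum.cong) (auto simp: oval_circ_vec[OF ow] dest: one_way_rev_arc[OF ow])
    also have "(\<Sum>a | otail s t a = v. of_bool (rev_arc a \<in> C))
        = (\<Sum>a | ohead s t a = v. of_bool (a \<in> C) :: real)"
      by (rule sum.reindex_bij_witness[of _ rev_arc rev_arc]) auto
    also have "(\<Sum>a | otail s t a = v. of_bool (a \<in> C)) - (\<Sum>a | ohead s t a = v. of_bool (a \<in> C))
        = real (card {a \<in> C. otail s t a = v}) - real (card {a \<in> C. ohead s t a = v})"
      by (simp only: sum_indicator_fiber)
    finally show ?thesis by (simp add: in_out)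
  qed
  moreover have "circ_vec C $ e \<in> \<int>" for e
    by (simp add: circ_vec_def)
  ultimately show ?thesis
    unfolding int_flows_def flows_def by blast
qed

subsection \<open>Nonnegative slack on the Voronoi cell\<close>

lemma VO_flows: "x \<in> VO s t \<Longrightarrow> x \<in> flows s t"
  unfolding VO_def by blast

lemma VO_inner_le:
  assumes "x \<in> VO s t" "\<mu> \<in> int_flows s t"
  shows "2 * (x \<bullet> \<mu>) \<le> qf \<mu>"
proof -
  have "qf x \<le> qf (x - \<mu>)" using assms unfolding VO_def by blast
  also have "qf (x - \<mu>) = qf x - 2 * (x \<bullet> \<mu>) + qf \<mu>"
    unfolding qf_def by (simp add: inner_diff_left inner_diff_right inner_commute)
  finally show ?thesis by simp
qed

lemma circuit_slack_nonneg:
  fixes s t :: "'e::finite \<Rightarrow> 'v"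
  assumes "x \<in> VO s t" "circuit s t (set cs)" "distinct (map fst cs)"
  shows "0 \<le> walk_slack x cs"
  using VO_inner_le[OF assms(1) circuit_int_flow[OF assms(2)]] circ_vec_walk_slack[OF assms(3), of x]
  by simp

lemma not_distinct_map_decomp:
  "\<not> distinct (map f xs) \<Longrightarrow> \<exists>p a q b r. xs = p @ a # q @ b # r \<and> f a = f b"
proof (induction xs)
  case (Cons x xs)
  show ?case
  proof (cases "f x \<in> f ` set xs")
    case True
    then obtain b where "b \<in> set xs" "f x = f b" by auto
    moreover obtain q r where "xs = q @ b # r"
      using \<open>b \<in> set xs\<close> split_list by metis
    ultimately have "x # xs = [] @ x # q @ b # r \<and> f x = f b" by simp
    then show ?thesis by blast
  next
    case False
    then have "\<not> distinct (map f xs)" using Cons.prems by simp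
    then obtain p a q b r where "xs = p @ a # q @ b # r" "f a = f b"
      using Cons.IH by blast
    then have "x # xs = (x # p) @ a # q @ b # r \<and> f a = f b" by simp
    then show ?thesis by blast
  qed
qed simp

text \<open>A closed walk that is not a circuit splits into two shorter closed walks of no larger
  total slack: at a repeated vertex (same total), or by cutting out a pair of opposite arcs
  (which contribute slack 2).\<close>
lemma closed_dwalk_split:
  assumes ws: "dwalk s t u ws u"
    and non_circuit: "\<not> distinct (map (otail s t) ws) \<or> \<not> distinct (map fst ws)"
  obtains W1 u1 W2 u2 where "dwalk s t u1 W1 u1" "dwalk s t u2 W2 u2"
    "length W1 < length ws" "length W2 < length ws"
    "walk_slack x W1 + walk_slack x W2 \<le> walk_slack x ws"
proof (cases "distinct (map (otail s t) ws)")
  case False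
  then obtain p a q b r where split: "ws = p @ a # q @ b # r" "otail s t a = otail s t b"
    using not_distinct_map_decomp by blast
  then have "dwalk s t (otail s t a) (a # q) (otail s t a)" "dwalk s t u (p @ b # r) u"
    using ws by (auto simp: dwalk_append)
  then show ?thesis by (rule that) (simp_all add: split(1))
next
  case True
  then obtain p a q b r where split: "ws = p @ a # q @ b # r" "fst a = fst b"
    using non_circuit not_distinct_map_decomp by blast
  have "a \<noteq> b" using True split(1) by auto
  then have b: "b = rev_arc a" by (rule same_edge_rev_arc[OF split(2)])
  then have "dwalk s t (ohead s t a) q (ohead s t a)" "dwalk s t u (p @ r) u"
    using ws split(1) by (auto simp: dwalk_append)
  then show ?thesis by (rule that) (simp_all add: split(1) b)
qed

lemma closed_dwalk_slack_nonneg: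
  fixes s t :: "'e::finite \<Rightarrow> 'v"
  assumes x: "x \<in> VO s t"
  shows "dwalk s t u ws u \<Longrightarrow> 0 \<le> walk_slack x ws"
proof (induction "length ws" arbitrary: u ws rule: less_induct)
  case less
  consider "ws = []"
    | "ws \<noteq> []" "distinct (map (otail s t) ws)" "distinct (map fst ws)"
    | "\<not> distinct (map (otail s t) ws) \<or> \<not> distinct (map fst ws)"
    by blast
  then show ?case
  proof cases
    case 1
    then show ?thesis by simp
  next
    case 2
    then have "circuit s t (set ws)"
      using less.prems by (auto simp: circuit_iff_closed_dwalk)
    then show ?thesis using circuit_slack_nonneg[OF x] 2 by blast
  next
    case 3
    obtain W1 u1 W2 u2 where W: "dwalk s t u1 W1 u1" "dwalk s t u2 W2 u2"
      "length W1 < length ws" "length W2 < length ws"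
      "walk_slack x W1 + walk_slack x W2 \<le> walk_slack x ws"
      using closed_dwalk_split[OF less.prems 3] .
    have "0 \<le> walk_slack x W1" "0 \<le> walk_slack x W2"
      using less.hyps[OF W(3) W(1)] less.hyps[OF W(4) W(2)] .
    then show ?thesis using W(5) by linarith
  qed
qed

subsection \<open>The arcs of tight circuits\<close>

definition tight_arcs :: "('e::finite \<Rightarrow> 'v) \<Rightarrow> ('e \<Rightarrow> 'v) \<Rightarrow> real ^ 'e \<Rightarrow> ('e \<times> bool) set" where
  "tight_arcs s t x = \<Union>{C. circuit s t C \<and> x \<in> Hyp s t (circ_vec C)}"

lemma Hyp_circuit_iff:
  fixes x :: "real ^ 'e::finite"
  assumes "distinct (map fst cs)"
  shows "x \<in> Hyp s t (circ_vec (set cs)) \<longleftrightarrow> x \<in> flows s t \<and> walk_slack x cs = 0"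
  unfolding Hyp_def using circ_vec_walk_slack[OF assms, of x] by auto

text \<open>Each arc of D(x) has a return walk in D(x) cancelling its slack: the rest of a tight
  circuit through it.\<close>
lemma tight_arc_return:
  assumes "a \<in> tight_arcs s t x"
  obtains P where "dwalk s t (ohead s t a) P (otail s t a)" "set P \<subseteq> tight_arcs s t x"
    "walk_slack x P = - walk_slack x [a]"
proof -
  obtain C where C: "circuit s t C" "x \<in> Hyp s t (circ_vec C)" "a \<in> C"
    using assms unfolding tight_arcs_def by blast
  then obtain cs u where cs: "C = set cs" "distinct (map fst cs)" "dwalk s t u cs u"
    by (auto simp: circuit_iff_closed_dwalk)
  obtain p q where split: "cs = p @ a # q" using C(3) cs(1) by (meson split_list)
  have "dwalk s t (ohead s t a) (q @ p) (otail s t a)"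
    using cs(3) split by (auto simp: dwalk_append)
  moreover have "C \<subseteq> tight_arcs s t x" using C(1,2) unfolding tight_arcs_def by blast
  then have "set (q @ p) \<subseteq> tight_arcs s t x" using cs(1) split by auto
  moreover have "walk_slack x cs = 0" using C(2) cs(1,2) Hyp_circuit_iff by blast
  then have "walk_slack x (q @ p) = - walk_slack x [a]" using split by simp
  ultimately show ?thesis using that by blast
qed

lemma tight_arcs_reverse_walk:
  "dwalk s t u ws v \<Longrightarrow> set ws \<subseteq> tight_arcs s t x \<Longrightarrow>
    \<exists>Q. dwalk s t v Q u \<and> set Q \<subseteq> tight_arcs s t x \<and> walk_slack x Q = - walk_slack x ws"
proof (induction ws arbitrary: u)
  case Nil
  then show ?case by (intro exI[of _ "[]"]) simp
next
  case (Cons a ws)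
  then have "dwalk s t (ohead s t a) ws v" "set ws \<subseteq> tight_arcs s t x" by auto
  then obtain Q where Q: "dwalk s t v Q (ohead s t a)" "set Q \<subseteq> tight_arcs s t x"
      "walk_slack x Q = - walk_slack x ws"
    using Cons.IH by blast
  obtain P where P: "dwalk s t (ohead s t a) P (otail s t a)" "set P \<subseteq> tight_arcs s t x"
      "walk_slack x P = - walk_slack x [a]"
    using tight_arc_return[of a s t x] Cons.prems(2) by auto
  have "dwalk s t v (Q @ P) u" using Q(1) P(1) Cons.prems(1) by (auto simp: dwalk_append)
  then show ?case using Q P by (intro exI[of _ "Q @ P"]) simp
qed

text \<open>D(x) never contains both orientations of an edge: reversing the closed walk formed by
  them would give a closed walk of slack -2.\<close>
lemma tight_arcs_one_way:
  fixes s t :: "'e::finite \<Rightarrow> 'v"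
  assumes x: "x \<in> VO s t"
  shows "one_way (tight_arcs s t x)"
  unfolding one_way_def
proof (intro allI notI)
  fix e
  assume "(e, True) \<in> tight_arcs s t x \<and> (e, False) \<in> tight_arcs s t x"
  then have in_D: "set [(e, True), rev_arc (e, True)] \<subseteq> tight_arcs s t x"
    by (simp add: rev_arc_def)
  let ?u = "otail s t (e, True)"
  have "dwalk s t ?u [(e, True), rev_arc (e, True)] ?u" by simp
  from tight_arcs_reverse_walk[OF this in_D] obtain Q where Q: "dwalk s t ?u Q ?u"
      "walk_slack x Q = - walk_slack x [(e, True), rev_arc (e, True)]"
    by blast
  then have "walk_slack x Q = -2" by simp
  then show False using closed_dwalk_slack_nonneg[OF x Q(1)] by simp
qed

lemma dwalk_rtrancl:
  "dwalk s t u P v \<Longrightarrow> set P \<subseteq> D \<Longrightarrow> (u, v) \<in> {(otail s t a, ohead s t a) | a. a \<in> D}\<^sup>*"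
proof (induction P arbitrary: u)
  case (Cons a P)
  then have a: "a \<in> D" "otail s t a = u" and P: "dwalk s t (ohead s t a) P v" "set P \<subseteq> D"
    by auto
  have "(u, ohead s t a) \<in> {(otail s t a, ohead s t a) | a. a \<in> D}" using a by blast
  moreover have "(ohead s t a, v) \<in> {(otail s t a, ohead s t a) | a. a \<in> D}\<^sup>*"
    using Cons.IH[OF P] .
  ultimately show ?case by (rule converse_rtrancl_into_rtrancl)
qed simp

text \<open>D(x) is a strongly connected orientation: each arc can be traversed backwards.\<close>
lemma tight_arcs_strongly_connected:
  fixes s t :: "'e::finite \<Rightarrow> 'v"
  assumes x: "x \<in> VO s t"
  shows "strongly_connected_orientation s t (tight_arcs s t x)"
proof -
  define R where "R = {(otail s t a, ohead s t a) | a. a \<in> tight_arcs s t x}"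
  have "R\<inverse> \<subseteq> R\<^sup>*"
  proof (rule subrelI)
    fix u v assume "(u, v) \<in> R\<inverse>"
    then obtain a where a: "a \<in> tight_arcs s t x" "v = otail s t a" "u = ohead s t a"
      unfolding R_def by blast
    obtain P where "dwalk s t (ohead s t a) P (otail s t a)" "set P \<subseteq> tight_arcs s t x"
      by (rule tight_arc_return[OF a(1)])
    then show "(u, v) \<in> R\<^sup>*" unfolding a(2,3) R_def by (rule dwalk_rtrancl)
  qed
  then have "R \<union> R\<inverse> \<subseteq> R\<^sup>*" by auto
  then have "(R \<union> R\<inverse>)\<^sup>* \<subseteq> (R\<^sup>*)\<^sup>*" by (rule rtrancl_mono)
  then have reach: "(R \<union> R\<inverse>)\<^sup>* \<subseteq> R\<^sup>*" by simp
  show ?thesis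
    unfolding strongly_connected_orientation_def Let_def R_def[symmetric]
  proof (intro conjI allI impI)
    show "\<not> ((e, True) \<in> tight_arcs s t x \<and> (e, False) \<in> tight_arcs s t x)" for e
      using tight_arcs_one_way[OF x] unfolding one_way_def by blast
    show "(u, v) \<in> R\<^sup>*" if "(u, v) \<in> (R \<union> R\<inverse>)\<^sup>*" for u v
      using reach that by blast
  qed
qed

text \<open>A circuit inside D(x) is tight: it and its reversal in D(x) are closed walks of
  opposite, nonnegative slack.\<close>
lemma circuit_in_tight_arcs:
  fixes s t :: "'e::finite \<Rightarrow> 'v"
  assumes x: "x \<in> VO s t" and C: "circuit s t C" and sub: "C \<subseteq> tight_arcs s t x"
  shows "x \<in> Hyp s t (circ_vec C)"
proof -
  obtain cs u where cs: "C = set cs" "distinct (map fst cs)" "dwalk s t u cs u"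
    using C by (auto simp: circuit_iff_closed_dwalk)
  obtain Q where Q: "dwalk s t u Q u" "walk_slack x Q = - walk_slack x cs"
    using tight_arcs_reverse_walk[OF cs(3)] sub cs(1) by blast
  have "0 \<le> walk_slack x Q" "0 \<le> walk_slack x cs"
    using closed_dwalk_slack_nonneg[OF x Q(1)] closed_dwalk_slack_nonneg[OF x cs(3)] .
  then have "walk_slack x cs = 0" using Q(2) by linarith
  then show ?thesis
    using Hyp_circuit_iff[OF cs(2)] cs(1) VO_flows[OF x] by blast
qed

subsection \<open>Circuits tight on a convex subset\<close>

definition tight_circuit_vecs ::
    "('e::finite \<Rightarrow> 'v) \<Rightarrow> ('e \<Rightarrow> 'v) \<Rightarrow> real ^ 'e \<Rightarrow> (real ^ 'e) set" where
  "tight_circuit_vecs s t x = {l \<in> Xi1 s t. x \<in> Hyp s t l}"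

lemma supp_circuit_vec: "circuit s t C \<Longrightarrow> supp (circ_vec C) = C"
  by (auto simp: circuit_iff_closed_dwalk supp_circ_vec distinct_edges_one_way)

lemma supp_tight_circuit_vecs:
  "(\<Union>l \<in> tight_circuit_vecs s t x. supp l) = tight_arcs s t x"
proof -
  have "tight_circuit_vecs s t x = circ_vec ` {C. circuit s t C \<and> x \<in> Hyp s t (circ_vec C)}"
    unfolding tight_circuit_vecs_def Xi1_def by blast
  moreover have "supp (circ_vec C) = C" if "C \<in> {C. circuit s t C \<and> x \<in> Hyp s t (circ_vec C)}" for C
    using that supp_circuit_vec by blast
  ultimately show ?thesis
    unfolding tight_arcs_def by auto
qed

lemma tight_circuit_vecs_iff_supp:
  fixes s t :: "'e::finite \<Rightarrow> 'v"
  assumes x: "x \<in> VO s t" and l: "l \<in> Xi1 s t"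
  shows "l \<in> tight_circuit_vecs s t x \<longleftrightarrow> supp l \<subseteq> tight_arcs s t x"
proof
  assume "l \<in> tight_circuit_vecs s t x"
  then show "supp l \<subseteq> tight_arcs s t x" using supp_tight_circuit_vecs by blast
next
  obtain C where C: "circuit s t C" "l = circ_vec C" using l unfolding Xi1_def by blast
  assume "supp l \<subseteq> tight_arcs s t x"
  then have "x \<in> Hyp s t l"
    using circuit_in_tight_arcs[OF x C(1)] supp_circuit_vec[OF C(1)] C(2) by simp
  then show "l \<in> tight_circuit_vecs s t x" using l unfolding tight_circuit_vecs_def by simp
qed

lemma finite_Xi1: "finite (Xi1 (s :: 'e::finite \<Rightarrow> 'v) t)"
proof -
  have "Xi1 s t \<subseteq> range circ_vec" unfolding Xi1_def by blast
  then show ?thesis by (rule finite_subset) simp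
qed

text \<open>A circuit tight at the midpoint of two points of V_O is tight at both, since both
  satisfy the Voronoi inequality.\<close>
lemma tight_circuit_vecs_midpoint:
  fixes s t :: "'e::finite \<Rightarrow> 'v"
  assumes x: "x \<in> VO s t" and y: "y \<in> VO s t"
  shows "tight_circuit_vecs s t ((1/2) *\<^sub>R x + (1/2) *\<^sub>R y)
           \<subseteq> tight_circuit_vecs s t x \<inter> tight_circuit_vecs s t y"
proof
  fix l assume "l \<in> tight_circuit_vecs s t ((1/2) *\<^sub>R x + (1/2) *\<^sub>R y)"
  then have l: "l \<in> Xi1 s t" "x \<bullet> l + y \<bullet> l = qf l"
    unfolding tight_circuit_vecs_def Hyp_def by (auto simp: inner_add_left)
  have "l \<in> int_flows s t" using l(1) circuit_int_flow unfolding Xi1_def by blast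
  then have "2 * (x \<bullet> l) \<le> qf l" "2 * (y \<bullet> l) \<le> qf l"
    using VO_inner_le[OF x] VO_inner_le[OF y] by auto
  then have "2 * (x \<bullet> l) = qf l" "2 * (y \<bullet> l) = qf l" using l(2) by linarith+
  then show "l \<in> tight_circuit_vecs s t x \<inter> tight_circuit_vecs s t y"
    using l(1) VO_flows[OF x] VO_flows[OF y] unfolding tight_circuit_vecs_def Hyp_def by simp
qed

text \<open>On a nonempty convex subset of V_O some point is tight exactly on the circuits tight
  on the whole set: take one with the fewest tight circuits.\<close>
lemma convex_common_tight_circuit_vecs:
  fixes s t :: "'e::finite \<Rightarrow> 'v"
  assumes cvx: "convex F" and sub: "F \<subseteq> VO s t" and ne: "F \<noteq> {}"
  obtains x0 where "x0 \<in> F" "{l \<in> Xi1 s t. F \<subseteq> Hyp s t l} = tight_circuit_vecs s t x0"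
proof -
  let ?T = "tight_circuit_vecs s t"
  obtain x0 where x0: "x0 \<in> F" and least: "\<And>y. y \<in> F \<Longrightarrow> card (?T x0) \<le> card (?T y)"
    using ex_has_least_nat[of "\<lambda>x. x \<in> F" _ "\<lambda>x. card (?T x)"] ne by blast
  have "?T x0 \<subseteq> ?T y" if y: "y \<in> F" for y
  proof (rule ccontr)
    assume not_sub: "\<not> ?T x0 \<subseteq> ?T y"
    let ?z = "(1/2) *\<^sub>R x0 + (1/2) *\<^sub>R y"
    have "?T ?z \<subseteq> ?T x0 \<inter> ?T y"
      using tight_circuit_vecs_midpoint x0 y sub by blast
    then have "?T ?z \<subset> ?T x0" using not_sub by blast
    moreover have "finite (?T x0)"
      using finite_Xi1[of s t] unfolding tight_circuit_vecs_def by simp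
    ultimately have "card (?T ?z) < card (?T x0)" by (rule psubset_card_mono[rotated])
    moreover have "?z \<in> F" using convexD[OF cvx x0 y, of "1/2" "1/2"] by simp
    ultimately show False using least[of ?z] by simp
  qed
  then have "{l \<in> Xi1 s t. F \<subseteq> Hyp s t l} = ?T x0"
    using x0 unfolding tight_circuit_vecs_def by blast
  then show ?thesis using that x0 by blast
qed

theorem mainTheorem6:
  fixes src tgt :: "'e::finite \<Rightarrow> 'v::finite"
    and F :: "(real ^ 'e) set"
  assumes "connected_graph src tgt"
    and "F face_of VO src tgt"
    and "F \<noteq> {}"
  shows "strongly_connected_orientation src tgt
           (\<Union>l \<in> {l \<in> Xi1 src tgt. F \<subseteq> Hyp src tgt l}. supp l)
       \<and> (\<forall>l \<in> Xi1 src tgt. (l \<in> {l \<in> Xi1 src tgt. F \<subseteq> Hyp src tgt l}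
              \<longleftrightarrow> supp l \<subseteq> (\<Union>l \<in> {l \<in> Xi1 src tgt. F \<subseteq> Hyp src tgt l}. supp l)))"
proof -
  have F_VO: "F \<subseteq> VO src tgt" using assms(2) by (rule face_of_imp_subset)
  obtain x0 where x0: "x0 \<in> F"
    and common: "{l \<in> Xi1 src tgt. F \<subseteq> Hyp src tgt l} = tight_circuit_vecs src tgt x0"
    using convex_common_tight_circuit_vecs[OF face_of_imp_convex[OF assms(2)] F_VO assms(3)] .
  have x0_VO: "x0 \<in> VO src tgt" using x0 F_VO by blast
  show ?thesis
    unfolding common supp_tight_circuit_vecs
    using tight_arcs_strongly_connected[OF x0_VO] tight_circuit_vecs_iff_supp[OF x0_VO] by blast
qed

end
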